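(* Let $L\in R[x][\partial]$ have order $r>0$ and let $k\in\mathbb{N}$ with $k\ge r$. Let $T$ be a desingularized operator for $L$ with $\deg_\partial(T)=k$. Then: (i) $\deg_x(\mathrm{lc}_\partial(T))=\min\{\deg_x(\mathrm{lc}_\partial(Q)): Q\in M_k(L)\setminus\{0\}\}$; (ii) $\partial^iT$ is a desingularized operator for $L$ for each $i\in\mathbb{N}$; (iii) writing $\mathrm{lc}_\partial(T)=ag$ with $a\in R$ and $g\in R[x]$ primitive, for every $F\in\mathrm{cont}(L)$ of order $j\ge k$, $\sigma^{j-k}(g)$ divides $\mathrm{lc}_\partial(F)$ in $R[x]$.
   Context: $R$ is a principal ideal domain with quotient field $Q_R$; $\sigma$ is an $R$-automorphism of $R[x]$ with $\sigma(x)=\gamma x+\tau$ ($\gamma$ a unit), $\delta$ an $R$-linear $\sigma$-derivation with $\deg\delta(x)\le1$; $R[x][\partial]$ is the Ore algebra with $\partial p=\sigma(p)\partial+\delta(p)$, inside $Q_R(x)[\partial]$. $\deg_\partial$, $\mathrm{lc}_\partial$: order and leading coefficient in $\partial$. Primitive polynomial: gcd of coefficients is $1$. $\mathrm{cont}(L)=Q_R(x)[\partial]L\cap R[x][\partial]$; $M_k(L)=\{P\in\mathrm{cont}(L):\deg_\partial P\le k\}$. For $p\in R[x]$ dividing $\mathrm{lc}_\partial(L)$: $p$ is removable from $L$ at order $k$ if there are $P\in Q_R(x)[\partial]$ of order $k$ and $w,v\in R[x]$ with $\gcd(p,w)=1$ such that $PL\in R[x][\partial]$ and $\sigma^{-k}(\mathrm{lc}_\partial(PL))=\frac{w}{vp}\mathrm{lc}_\partial(L)$;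 non-removable if not removable at any order. If $\mathrm{lc}_\partial(L)=c\,p_1^{e_1}\cdots p_m^{e_m}$ ($c\in R$, $p_i\in R[x]\setminus R$ irreducible, pairwise coprime), $T\in R[x][\partial]$ of order $k$ is desingularized for $L$ if $T\in\mathrm{cont}(L)$ and $\sigma^{r-k}(\mathrm{lc}_\partial(T))=\frac{a}{b\,p_1^{k_1}\cdots p_m^{k_m}}\mathrm{lc}_\partial(L)$ with $a,b\in R$, $b\neq0$, and $p_i^{d_i}$ non-removable from $L$ for all integers $d_i>k_i$. *)

theory Defs
  imports "HOL-Computational_Algebra.Polynomial_Factorial"
begin

definition pid :: "'a::comm_ring_1 itself \<Rightarrow> bool" where
  "pid _ \<longleftrightarrow> (\<forall>I::'a set. (0 \<in> I \<and> (\<forall>x\<in>I. \<forall>y\<in>I. x + y \<in> I) \<and> (\<forall>x\<in>I. \<forall>c. c * x \<in> I))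
      \<longrightarrow> (\<exists>g. I = {c * g | c. True}))"

text \<open>Generic Ore polynomials over a commutative coefficient ring K, stored as
  K poly in the variable \<partial> with coefficients on the left:
  P = sum_i (coeff P i) \<partial>^i.  Multiplication: \<partial> b = s(b) \<partial> + d(b).\<close>
definition ore_d :: "('k::comm_ring_1 \<Rightarrow> 'k) \<Rightarrow> ('k \<Rightarrow> 'k) \<Rightarrow> 'k poly \<Rightarrow> 'k poly" where
  "ore_d s d Q = pCons 0 (map_poly s Q) + map_poly d Q"

definition ore_mult :: "('k::comm_ring_1 \<Rightarrow> 'k) \<Rightarrow> ('k \<Rightarrow> 'k) \<Rightarrow> 'k poly \<Rightarrow> 'k poly \<Rightarrow> 'k poly" where
  "ore_mult s d P Q = (\<Sum>i\<le>degree P. smult (coeff P i) ((ore_d s d ^^ i) Q))"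

definition ore_sigma :: "'a::comm_ring_1 \<Rightarrow> 'a \<Rightarrow> 'a poly \<Rightarrow> 'a poly" where
  "ore_sigma \<gamma> \<tau> p = pcompose p [:\<tau>, \<gamma>:]"

definition spow :: "('b \<Rightarrow> 'b) \<Rightarrow> int \<Rightarrow> 'b \<Rightarrow> 'b" where
  "spow s n = (if n \<ge> 0 then s ^^ nat n else inv s ^^ nat (- n))"

text \<open>Q_R(x) is realised as the fraction field of R[x]; sigma and delta extend to it.\<close>
definition sigK :: "('a::{factorial_ring_gcd, semiring_gcd_mult_normalize} poly \<Rightarrow> 'a poly) \<Rightarrow> 'a poly fract \<Rightarrow> 'a poly fract" where
  "sigK s f = (SOME y. \<exists>a b. b \<noteq> 0 \<and> f = Fract a b \<and> y = Fract (s a) (s b))"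

definition delK :: "('a::{factorial_ring_gcd, semiring_gcd_mult_normalize} poly \<Rightarrow> 'a poly) \<Rightarrow> ('a poly \<Rightarrow> 'a poly) \<Rightarrow> 'a poly fract \<Rightarrow> 'a poly fract" where
  "delK s d f = (SOME y. \<exists>a b. b \<noteq> 0 \<and> f = Fract a b \<and>
      y = Fract (d a * s b - s a * d b) (s b * b))"

definition emb :: "'a::{factorial_ring_gcd, semiring_gcd_mult_normalize} poly poly \<Rightarrow> 'a poly fract poly" where
  "emb Q = map_poly to_fract Q"

text \<open>cont(L) = Q_R(x)[\<partial>] L \<inter> R[x][\<partial>].\<close>
definition ore_cont :: "('a::{factorial_ring_gcd, semiring_gcd_mult_normalize} poly \<Rightarrow> 'a poly) \<Rightarrow> ('a poly \<Rightarrow> 'a poly) \<Rightarrow> 'a poly poly \<Rightarrow> 'a poly poly set" where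
  "ore_cont s d L = {Q. \<exists>P. ore_mult (sigK s) (delK s d) P (emb L) = emb Q}"

definition Mk :: "('a::{factorial_ring_gcd, semiring_gcd_mult_normalize} poly \<Rightarrow> 'a poly) \<Rightarrow> ('a poly \<Rightarrow> 'a poly) \<Rightarrow> nat \<Rightarrow> 'a poly poly \<Rightarrow> 'a poly poly set" where
  "Mk s d k L = {P \<in> ore_cont s d L. degree P \<le> k}"

definition removable_at :: "('a::{factorial_ring_gcd, semiring_gcd_mult_normalize} poly \<Rightarrow> 'a poly) \<Rightarrow> ('a poly \<Rightarrow> 'a poly) \<Rightarrow> 'a poly \<Rightarrow> 'a poly poly \<Rightarrow> nat \<Rightarrow> bool" where
  "removable_at s d p L k \<longleftrightarrow> p dvd lead_coeff L \<and>
     (\<exists>(P::'a poly fract poly) PL w v. P \<noteq> 0 \<and> degree P = k \<and>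
        ore_mult (sigK s) (delK s d) P (emb L) = emb PL \<and>
        coprime p w \<and> v \<noteq> 0 \<and>
        to_fract (spow s (- int k) (lead_coeff PL))
          = to_fract w / to_fract (v * p) * to_fract (lead_coeff L))"

definition non_removable :: "('a::{factorial_ring_gcd, semiring_gcd_mult_normalize} poly \<Rightarrow> 'a poly) \<Rightarrow> ('a poly \<Rightarrow> 'a poly) \<Rightarrow> 'a poly \<Rightarrow> 'a poly poly \<Rightarrow> bool" where
  "non_removable s d p L \<longleftrightarrow> \<not> (\<exists>k. removable_at s d p L k)"

definition desingularized :: "('a::{factorial_ring_gcd, semiring_gcd_mult_normalize} poly \<Rightarrow> 'a poly) \<Rightarrow> ('a poly \<Rightarrow> 'a poly) \<Rightarrow> 'a poly poly \<Rightarrow> 'a poly poly \<Rightarrow> bool" where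
  "desingularized s d L T \<longleftrightarrow> T \<in> ore_cont s d L \<and>
     (\<exists>(c::'a) (m::nat) (p::nat \<Rightarrow> 'a poly) (e::nat \<Rightarrow> nat) (kk::nat \<Rightarrow> nat) (a::'a) (b::'a).
        lead_coeff L = smult c (\<Prod>i<m. p i ^ e i) \<and>
        (\<forall>i<m. irreducible (p i) \<and> degree (p i) > 0 \<and> e i > 0) \<and>
        (\<forall>i<m. \<forall>j<m. i \<noteq> j \<longrightarrow> coprime (p i) (p j)) \<and>
        b \<noteq> 0 \<and>
        to_fract (spow s (int (degree L) - int (degree T)) (lead_coeff T))
          = to_fract [:a:] / to_fract ([:b:] * (\<Prod>i<m. p i ^ kk i)) * to_fract (lead_coeff L) \<and>
        (\<forall>i<m. \<forall>dd. dd > kk i \<longrightarrow> non_removable s d (p i ^ dd) L))"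

end

theory Submission
  imports Defs
begin

text \<open>Let \<open>F = P L\<close> be a nonzero element of \<open>cont(L)\<close> with \<open>n = ord P\<close>, and write
  \<open>\<sigma>\<^sup>-\<^sup>n(lc F) / lc L = u / v\<close> in lowest terms. If \<open>p\<^sub>i\<^sup>d\<close> divided \<open>v\<close>, then \<open>P\<close> would witness that
  \<open>p\<^sub>i\<^sup>d\<close> is removable from \<open>L\<close> at order \<open>n\<close>. Hence, if \<open>lc L = c \<Prod> p\<^sub>i^e\<^sub>i\<close> and no \<open>p\<^sub>i\<^sup>d\<close> with
  \<open>d > k\<^sub>i\<close> is removable, \<open>v\<close> divides \<open>c \<Prod> p\<^sub>i^k\<^sub>i\<close>. A desingularized \<open>T\<close> of order \<open>k\<close> satisfies
  \<open>b (\<Prod> p\<^sub>i^k\<^sub>i) \<sigma>\<^sup>r\<^sup>-\<^sup>k(lc T) = a lc L\<close>, so \<open>\<sigma>\<^sup>r\<^sup>-\<^sup>k(lc T)\<close> divides a nonzero constant multiple of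
  \<open>\<sigma>\<^sup>r\<^sup>-\<^sup>j(lc F)\<close> for every nonzero \<open>F \<in> cont(L)\<close> of order \<open>j\<close>. Comparing degrees gives (i),
  Gauss's lemma gives (iii), and (ii) holds because \<open>\<partial>\<^sup>i T\<close> stays in \<open>cont(L)\<close> with leading
  coefficient \<open>\<sigma>\<^sup>i(lc T)\<close>.\<close>

section \<open>Ore products\<close>

locale ore_derivation =
  fixes s d :: "'k::idom \<Rightarrow> 'k"
  assumes s_add: "\<And>x y. s (x + y) = s x + s y"
    and s_mult: "\<And>x y. s (x * y) = s x * s y"
    and d_add: "\<And>x y. d (x + y) = d x + d y"
    and d_mult: "\<And>x y. d (x * y) = s x * d y + d x * y"
begin

lemma s_0: "s 0 = 0"
  using s_add[of 0 0] by (metis add.right_neutral add_cancel_right_right)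

lemma d_0: "d 0 = 0"
  using d_add[of 0 0] by (metis add.right_neutral add_cancel_right_right)

lemma coeff_ore_d:
  "coeff (ore_d s d Q) n = (case n of 0 \<Rightarrow> 0 | Suc m \<Rightarrow> s (coeff Q m)) + d (coeff Q n)"
  by (simp add: ore_d_def coeff_pCons coeff_map_poly s_0 d_0 split: nat.split)

lemma ore_d_0: "ore_d s d 0 = 0"
  by (rule poly_eqI) (simp add: coeff_ore_d s_0 d_0 split: nat.split)

lemma ore_d_add: "ore_d s d (X + Y) = ore_d s d X + ore_d s d Y"
  by (rule poly_eqI) (simp add: coeff_ore_d s_add d_add split: nat.split)

lemma ore_d_sum: "ore_d s d (sum f A) = (\<Sum>i\<in>A. ore_d s d (f i))"
  by (induction A rule: infinite_finite_induct) (simp_all add: ore_d_0 ore_d_add)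

lemma ore_d_smult: "ore_d s d (smult c X) = smult (s c) (ore_d s d X) + smult (d c) X"
  by (rule poly_eqI) (simp add: coeff_ore_d s_mult d_mult algebra_simps split: nat.split)

lemma degree_ore_d_le: "degree (ore_d s d Q) \<le> Suc (degree Q)"
  by (rule degree_le) (auto simp: coeff_ore_d s_0 d_0 coeff_eq_0 split: nat.split)

text \<open>\<open>ore_d s d P\<close> is the product \<open>\<partial> P\<close>, so this is associativity \<open>\<partial> (P Q) = (\<partial> P) Q\<close>.\<close>
lemma ore_d_ore_mult: "ore_d s d (ore_mult s d P Q) = ore_mult s d (ore_d s d P) Q"
proof -
  let ?D = "ore_d s d"
  define N where "N = degree P"
  have "ore_mult s d (?D P) Q = (\<Sum>i\<le>Suc N. smult (coeff (?D P) i) ((?D ^^ i) Q))"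
    unfolding ore_mult_def
    by (rule sum.mono_neutral_left) (auto simp: coeff_eq_0 N_def degree_ore_d_le le_less_trans)
  also have "\<dots> = (\<Sum>i\<le>Suc N. smult (case i of 0 \<Rightarrow> 0 | Suc m \<Rightarrow> s (coeff P m)) ((?D ^^ i) Q))
        + (\<Sum>i\<le>Suc N. smult (d (coeff P i)) ((?D ^^ i) Q))"
    by (simp add: coeff_ore_d smult_add_left sum.distrib)
  also have "(\<Sum>i\<le>Suc N. smult (case i of 0 \<Rightarrow> 0 | Suc m \<Rightarrow> s (coeff P m)) ((?D ^^ i) Q))
      = (\<Sum>i\<le>N. smult (s (coeff P i)) ((?D ^^ Suc i) Q))"
    by (subst sum.atMost_Suc_shift) simp
  also have "(\<Sum>i\<le>Suc N. smult (d (coeff P i)) ((?D ^^ i) Q)) = (\<Sum>i\<le>N. smult (d (coeff P i)) ((?D ^^ i) Q))"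
    by (simp add: N_def coeff_eq_0 d_0)
  finally have "ore_mult s d (?D P) Q
      = (\<Sum>i\<le>N. smult (s (coeff P i)) ((?D ^^ Suc i) Q) + smult (d (coeff P i)) ((?D ^^ i) Q))"
    by (simp add: sum.distrib)
  also have "\<dots> = ?D (ore_mult s d P Q)"
    by (simp add: ore_mult_def N_def ore_d_sum ore_d_smult)
  finally show ?thesis by simp
qed

context
  assumes s_nonzero: "\<And>x. x \<noteq> 0 \<Longrightarrow> s x \<noteq> 0"
begin

lemma degree_lead_coeff_ore_d:
  assumes "Q \<noteq> 0"
  shows "degree (ore_d s d Q) = Suc (degree Q) \<and> lead_coeff (ore_d s d Q) = s (lead_coeff Q)"
proof -
  have top: "coeff (ore_d s d Q) (Suc (degree Q)) = s (lead_coeff Q)"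
    by (simp add: coeff_ore_d d_0 coeff_eq_0)
  moreover have "s (lead_coeff Q) \<noteq> 0"
    using s_nonzero assms by simp
  ultimately have "degree (ore_d s d Q) = Suc (degree Q)"
    using degree_ore_d_le le_degree by (metis le_antisym)
  with top show ?thesis by simp
qed

lemma degree_lead_coeff_ore_d_pow:
  assumes "Q \<noteq> 0"
  shows "degree ((ore_d s d ^^ i) Q) = degree Q + i \<and> lead_coeff ((ore_d s d ^^ i) Q) = (s ^^ i) (lead_coeff Q)"
proof (induction i)
  case (Suc i)
  have "(s ^^ i) (lead_coeff Q) \<noteq> 0"
    by (induction i) (use assms s_nonzero in auto)
  then have "(ore_d s d ^^ i) Q \<noteq> 0"
    using Suc.IH by force
  from degree_lead_coeff_ore_d[OF this] Suc.IH show ?case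
    by (metis add_Suc_right funpow.simps(2) o_apply)
qed simp

lemma degree_ore_mult:
  assumes "P \<noteq> 0" "Q \<noteq> 0"
  shows "degree (ore_mult s d P Q) = degree P + degree Q"
proof -
  define N where "N = degree P"
  let ?f = "\<lambda>i. smult (coeff P i) ((ore_d s d ^^ i) Q)"
  have split: "ore_mult s d P Q = (\<Sum>i<N. ?f i) + ?f N"
    unfolding ore_mult_def N_def by (simp add: lessThan_Suc_atMost[symmetric])
  have top: "degree (?f N) = N + degree Q"
    using degree_lead_coeff_ore_d_pow[OF assms(2), of N] assms(1) N_def by simp
  show ?thesis
  proof (cases N)
    case 0
    then show ?thesis using split top N_def by simp
  next
    case (Suc M)
    have "degree (\<Sum>i<N. ?f i) \<le> M + degree Q"
      by (rule degree_sum_le)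
         (use degree_lead_coeff_ore_d_pow[OF assms(2)] Suc in \<open>auto intro: order.trans[OF degree_smult_le]\<close>)
    then show ?thesis
      using split top N_def Suc by (simp add: degree_add_eq_right)
  qed
qed

end

end

lemma ore_mult_monom: "ore_mult s d (monom 1 i) T = (ore_d s d ^^ i) T"
proof -
  have "ore_mult s d (monom 1 i) T = (\<Sum>j\<le>i. if i = j then (ore_d s d ^^ j) T else 0)"
    unfolding ore_mult_def by (intro sum.cong) (simp_all add: degree_monom_eq coeff_monom)
  then show ?thesis by simp
qed

section \<open>Affine substitutions\<close>

definition is_affine_subst :: "('a::idom poly \<Rightarrow> 'a poly) \<Rightarrow> bool" where
  "is_affine_subst f \<longleftrightarrow> (\<exists>q. degree q = 1 \<and> f = (\<lambda>p. p \<circ>\<^sub>p q))"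

lemma is_affine_subst_funpow:
  assumes "is_affine_subst f"
  shows "is_affine_subst (f ^^ n)"
proof (induction n)
  case 0
  have "id = (\<lambda>p::'a poly. p \<circ>\<^sub>p [:0, 1:])"
    by (simp add: fun_eq_iff pcompose_idR)
  then show ?case
    unfolding is_affine_subst_def by (intro exI[of _ "[:0, 1:]"]) simp
next
  case (Suc n)
  obtain q where q: "degree q = 1" "f = (\<lambda>p. p \<circ>\<^sub>p q)"
    using assms unfolding is_affine_subst_def by blast
  obtain q' where q': "degree q' = 1" "f ^^ n = (\<lambda>p. p \<circ>\<^sub>p q')"
    using Suc.IH unfolding is_affine_subst_def by blast
  have "f ^^ Suc n = (\<lambda>p. p \<circ>\<^sub>p (q' \<circ>\<^sub>p q))"
    unfolding funpow.simps(2) q'(2) by (simp add: fun_eq_iff q(2) pcompose_assoc)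
  moreover have "degree (q' \<circ>\<^sub>p q) = 1"
    by (simp add: degree_pcompose q q')
  ultimately show ?case
    unfolding is_affine_subst_def by blast
qed

context
  fixes f :: "'a::idom poly \<Rightarrow> 'a poly"
  assumes affine: "is_affine_subst f"
begin

lemma affine_subst_degree: "degree (f p) = degree p"
  using affine by (auto simp: is_affine_subst_def degree_pcompose)

lemma affine_subst_eq_0_iff: "f p = 0 \<longleftrightarrow> p = 0"
  using affine by (auto simp: is_affine_subst_def pcompose_eq_0_iff)

lemma affine_subst_add: "f (p + p') = f p + f p'"
  using affine by (auto simp: is_affine_subst_def pcompose_add)

lemma affine_subst_mult: "f (p * p') = f p * f p'"
  using affine by (auto simp: is_affine_subst_def pcompose_mult)

lemma affine_subst_smult: "f (smult c p) = smult c (f p)"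
  using affine by (auto simp: is_affine_subst_def pcompose_smult)

lemma affine_subst_dvd: "p dvd p' \<Longrightarrow> f p dvd f p'"
  by (metis affine_subst_mult dvd_def)

end

lemma content_dvd_content_affine_subst:
  fixes f :: "'a::{factorial_ring_gcd, semiring_gcd_mult_normalize} poly \<Rightarrow> 'a poly"
  assumes "is_affine_subst f"
  shows "content p dvd content (f p)"
proof -
  have "f p = smult (content p) (f (primitive_part p))"
    by (metis affine_subst_smult[OF assms] content_times_primitive_part)
  then show ?thesis by simp
qed

lemma funpow_cancel:
  fixes f g :: "'a \<Rightarrow> 'a"
  assumes "\<And>x. f (g x) = x"
  shows "(f ^^ n) ((g ^^ n) x) = x"
proof (induction n arbitrary: x)
  case (Suc n)
  have "(f ^^ Suc n) ((g ^^ Suc n) x) = (f ^^ n) (f (g ((g ^^ n) x)))"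
    by (simp add: funpow_swap1)
  then show ?case
    using Suc assms by simp
qed simp

locale sigma_auto =
  fixes \<gamma> \<tau> :: "'a::{factorial_ring_gcd, semiring_gcd_mult_normalize}"
  assumes gamma_unit: "is_unit \<gamma>"
begin

abbreviation sig where "sig \<equiv> ore_sigma \<gamma> \<tau>"

definition sig_inv :: "'a poly \<Rightarrow> 'a poly" where
  "sig_inv p = p \<circ>\<^sub>p [:- \<tau> * (1 div \<gamma>), 1 div \<gamma>:]"

lemma gamma_mult_inverse: "\<gamma> * (1 div \<gamma>) = 1"
  using gamma_unit by (rule is_unitE) simp

lemma is_affine_subst_sig: "is_affine_subst sig"
  unfolding is_affine_subst_def ore_sigma_def[abs_def]
  using gamma_unit by (intro exI[of _ "[:\<tau>, \<gamma>:]"]) auto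

lemma is_affine_subst_sig_inv: "is_affine_subst sig_inv"
  unfolding is_affine_subst_def sig_inv_def[abs_def]
  using gamma_mult_inverse by (intro exI[of _ "[:- \<tau> * (1 div \<gamma>), 1 div \<gamma>:]"]) auto

lemma sig_sig_inv: "sig (sig_inv p) = p"
proof -
  have "[:- \<tau> * (1 div \<gamma>), 1 div \<gamma>:] \<circ>\<^sub>p [:\<tau>, \<gamma>:] = [:0, 1:]"
    by (simp add: pcompose_pCons algebra_simps gamma_mult_inverse)
  then show ?thesis
    by (simp add: ore_sigma_def sig_inv_def pcompose_assoc[symmetric])
qed

lemma sig_inv_sig: "sig_inv (sig p) = p"
proof -
  have "[:\<tau>, \<gamma>:] \<circ>\<^sub>p [:- \<tau> * (1 div \<gamma>), 1 div \<gamma>:] = [:0, 1:]"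
    by (simp add: pcompose_pCons algebra_simps gamma_mult_inverse)
  then show ?thesis
    by (simp add: ore_sigma_def sig_inv_def pcompose_assoc[symmetric])
qed

lemma is_affine_subst_sig_pow: "is_affine_subst (sig ^^ n)"
  by (rule is_affine_subst_funpow[OF is_affine_subst_sig])

lemma is_affine_subst_sig_inv_pow: "is_affine_subst (sig_inv ^^ n)"
  by (rule is_affine_subst_funpow[OF is_affine_subst_sig_inv])

lemma spow_sig_nat: "spow sig (int n) = sig ^^ n"
  by (simp add: spow_def)

lemma spow_sig_neg: "spow sig (- int n) = sig_inv ^^ n"
proof -
  have "inv sig = sig_inv"
    by (rule inv_unique_comp) (simp_all add: fun_eq_iff sig_sig_inv sig_inv_sig)
  then show ?thesis
    by (cases "n = 0") (simp_all add: spow_def)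
qed

end

section \<open>The Ore algebra and its extension to the fraction field\<close>

lemma coeff_emb: "coeff (emb X) n = to_fract (coeff X n)"
  by (simp add: emb_def coeff_map_poly)

lemma emb_eq_iff: "emb X = emb Y \<longleftrightarrow> X = Y"
  by (auto simp: poly_eq_iff coeff_emb)

lemma degree_emb: "degree (emb X) = degree X"
  by (simp add: emb_def degree_map_poly)

locale ore_algebra = sigma_auto +
  fixes \<delta> :: "'a poly \<Rightarrow> 'a poly"
  assumes delta_add: "\<And>p q. \<delta> (p + q) = \<delta> p + \<delta> q"
    and delta_mult: "\<And>p q. \<delta> (p * q) = ore_sigma \<gamma> \<tau> p * \<delta> q + \<delta> p * q"
begin

lemma sig_add: "sig (p + q) = sig p + sig q"
  by (rule affine_subst_add[OF is_affine_subst_sig])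

lemma sig_mult: "sig (p * q) = sig p * sig q"
  by (rule affine_subst_mult[OF is_affine_subst_sig])

lemma sig_eq_0_iff: "sig p = 0 \<longleftrightarrow> p = 0"
  by (rule affine_subst_eq_0_iff[OF is_affine_subst_sig])

sublocale poly: ore_derivation sig \<delta>
  by unfold_locales (simp_all add: sig_add sig_mult delta_add delta_mult)

lemma sig_1: "sig 1 = 1"
  by (simp add: ore_sigma_def pcompose_1)

lemma delta_1: "\<delta> 1 = 0"
proof -
  have "\<delta> 1 = \<delta> 1 + \<delta> 1"
    using delta_mult[of 1 1] by (simp add: sig_1)
  then show ?thesis
    by (metis add_cancel_right_right)
qed

lemma delta_swap: "(sig x - x) * \<delta> y = (sig y - y) * \<delta> x"
  using delta_mult[of x y] delta_mult[of y x] by (simp add: algebra_simps)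

abbreviation sK where "sK \<equiv> sigK sig"
abbreviation dK where "dK \<equiv> delK sig \<delta>"

lemma sK_Fract: "b \<noteq> 0 \<Longrightarrow> sK (Fract a b) = Fract (sig a) (sig b)"
  unfolding sigK_def
proof (rule some_equality)
  fix y assume b: "b \<noteq> 0"
    and "\<exists>a' b'. b' \<noteq> 0 \<and> Fract a b = Fract a' b' \<and> y = Fract (sig a') (sig b')"
  then obtain a' b' where b': "b' \<noteq> 0" and eq: "Fract a b = Fract a' b'"
    and y: "y = Fract (sig a') (sig b')"
    by blast
  from eq b b' have "a * b' = a' * b"
    by (simp add: eq_fract)
  then have "sig a * sig b' = sig a' * sig b"
    by (metis sig_mult)
  then show "y = Fract (sig a) (sig b)"
    using y b b' by (simp add: eq_fract sig_eq_0_iff)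
qed blast

text \<open>Well-definedness of the quotient rule hinges on the symmetry \<open>delta_swap\<close>.\<close>
lemma dK_Fract: "b \<noteq> 0 \<Longrightarrow> dK (Fract a b) = Fract (\<delta> a * sig b - sig a * \<delta> b) (sig b * b)"
  unfolding delK_def
proof (rule some_equality)
  fix y assume b: "b \<noteq> 0" and "\<exists>a' b'. b' \<noteq> 0 \<and> Fract a b = Fract a' b' \<and>
     y = Fract (\<delta> a' * sig b' - sig a' * \<delta> b') (sig b' * b')"
  then obtain a' b' where b': "b' \<noteq> 0" and eq: "Fract a b = Fract a' b'"
     and y: "y = Fract (\<delta> a' * sig b' - sig a' * \<delta> b') (sig b' * b')"
    by blast
  from eq b b' have cross: "a * b' = a' * b"
    by (simp add: eq_fract)
  then have "sig a * sig b' = sig a' * sig b"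
    by (metis sig_mult)
  moreover from cross have "sig a * \<delta> b' + \<delta> a * b' = sig a' * \<delta> b + \<delta> a' * b"
    by (metis delta_mult)
  moreover have "(sig b - b) * \<delta> b' = (sig b' - b') * \<delta> b"
    by (rule delta_swap)
  ultimately have "(\<delta> a' * sig b' - sig a' * \<delta> b') * (sig b * b) = (\<delta> a * sig b - sig a * \<delta> b) * (sig b' * b')"
    using cross by algebra
  then show "y = Fract (\<delta> a * sig b - sig a * \<delta> b) (sig b * b)"
    using y b b' by (simp add: eq_fract sig_eq_0_iff)
qed blast

lemma sK_to_fract: "sK (to_fract p) = to_fract (sig p)"
  by (simp add: to_fract_def sK_Fract sig_1)

lemma dK_to_fract: "dK (to_fract p) = to_fract (\<delta> p)"
  by (simp add: to_fract_def dK_Fract sig_1 delta_1)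

lemma sK_nonzero: "x \<noteq> 0 \<Longrightarrow> sK x \<noteq> 0"
  by (cases x) (auto simp: sK_Fract eq_fract sig_eq_0_iff Zero_fract_def)

lemma sK_add: "sK (x + y) = sK x + sK y"
  by (cases x; cases y) (simp add: sK_Fract sig_mult sig_add sig_eq_0_iff)

lemma sK_mult: "sK (x * y) = sK x * sK y"
  by (cases x; cases y) (simp add: sK_Fract sig_mult sig_eq_0_iff)

lemma dK_add: "dK (x + y) = dK x + dK y"
proof (cases x; cases y)
  fix a b c d assume x: "x = Fract a b" "b \<noteq> 0" and y: "y = Fract c d" "d \<noteq> 0"
  have "(sig b - b) * \<delta> d = (sig d - d) * \<delta> b"
    by (rule delta_swap)
  then have "(\<delta> (a * d + c * b) * sig (b * d) - sig (a * d + c * b) * \<delta> (b * d)) * (sig b * b * (sig d * d))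
     = ((\<delta> a * sig b - sig a * \<delta> b) * (sig d * d) + (\<delta> c * sig d - sig c * \<delta> d) * (sig b * b))
       * (sig (b * d) * (b * d))"
    unfolding delta_add delta_mult sig_add sig_mult by algebra
  with x y show ?thesis
    by (simp add: dK_Fract sig_eq_0_iff eq_fract)
qed

lemma dK_mult: "dK (x * y) = sK x * dK y + dK x * y"
proof (cases x; cases y)
  fix a b c d assume x: "x = Fract a b" "b \<noteq> 0" and y: "y = Fract c d" "d \<noteq> 0"
  have "(sig b - b) * \<delta> d = (sig d - d) * \<delta> b" "(sig b - b) * \<delta> c = (sig c - c) * \<delta> b"
    by (rule delta_swap)+
  then have "((sig a * \<delta> c + \<delta> a * c) * (sig b * sig d) - sig a * sig c * (sig b * \<delta> d + \<delta> b * d)) * (sig b * d)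
      = sig a * (\<delta> c * sig d - sig c * \<delta> d) * (sig b * b * d)
        + (\<delta> a * sig b - sig a * \<delta> b) * c * (sig b * (sig d * d))"
    by algebra
  with x y show ?thesis
    by (simp add: dK_Fract sK_Fract sig_eq_0_iff eq_fract sig_mult delta_mult)
qed

sublocale frac: ore_derivation sK dK
  by unfold_locales (simp_all add: sK_add sK_mult dK_add dK_mult)

lemma emb_ore_d: "emb (ore_d sig \<delta> X) = ore_d sK dK (emb X)"
  by (rule poly_eqI)
     (simp add: coeff_emb poly.coeff_ore_d frac.coeff_ore_d sK_to_fract dK_to_fract split: nat.split)

lemma emb_ore_d_pow: "emb ((ore_d sig \<delta> ^^ i) X) = (ore_d sK dK ^^ i) (emb X)"
  by (induction i) (simp_all add: emb_ore_d)

lemma ore_d_in_ore_cont: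
  assumes "T \<in> ore_cont sig \<delta> L"
  shows "ore_d sig \<delta> T \<in> ore_cont sig \<delta> L"
proof -
  from assms obtain P where "ore_mult sK dK P (emb L) = emb T"
    unfolding ore_cont_def by blast
  then have "ore_mult sK dK (ore_d sK dK P) (emb L) = emb (ore_d sig \<delta> T)"
    by (simp add: frac.ore_d_ore_mult[symmetric] emb_ore_d)
  then show ?thesis
    unfolding ore_cont_def by blast
qed

lemma ore_d_pow_in_ore_cont: "T \<in> ore_cont sig \<delta> L \<Longrightarrow> (ore_d sig \<delta> ^^ i) T \<in> ore_cont sig \<delta> L"
  by (induction i) (simp_all add: ore_d_in_ore_cont)

lemma degree_lead_coeff_ore_d_pow:
  "T \<noteq> 0 \<Longrightarrow> degree ((ore_d sig \<delta> ^^ i) T) = degree T + i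
     \<and> lead_coeff ((ore_d sig \<delta> ^^ i) T) = (sig ^^ i) (lead_coeff T)"
  by (rule poly.degree_lead_coeff_ore_d_pow) (simp_all add: sig_eq_0_iff)

lemma ore_cont_factor:
  assumes "F \<in> ore_cont sig \<delta> L" "F \<noteq> 0" "L \<noteq> 0"
  obtains P where "P \<noteq> 0" "degree F = degree P + degree L" "ore_mult sK dK P (emb L) = emb F"
proof -
  from assms(1) obtain P where P: "ore_mult sK dK P (emb L) = emb F"
    unfolding ore_cont_def by blast
  have "ore_mult sK dK 0 (emb L) = emb 0"
    by (simp add: ore_mult_def emb_def)
  then have "P \<noteq> 0"
    using P assms(2) emb_eq_iff by metis
  moreover have "emb L \<noteq> 0"
    using assms(3) by (simp add: emb_def)
  ultimately have "degree (emb F) = degree P + degree (emb L)"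
    by (simp add: P[symmetric] frac.degree_ore_mult sK_nonzero)
  with P \<open>P \<noteq> 0\<close> show ?thesis
    by (intro that) (simp_all add: degree_emb)
qed

lemma degree_le_of_ore_cont: "F \<in> ore_cont sig \<delta> L \<Longrightarrow> F \<noteq> 0 \<Longrightarrow> L \<noteq> 0 \<Longrightarrow> degree L \<le> degree F"
  by (metis ore_cont_factor le_add2)

end

section \<open>Leading coefficients of elements of the contraction\<close>

lemma dvd_prod_power_bound:
  fixes v c :: "'a::factorial_semiring" and m :: nat
  assumes dvd: "v dvd c * (\<Prod>i<m. p i ^ e i)" and nz: "c * (\<Prod>i<m. p i ^ e i) \<noteq> 0"
    and irr: "\<And>i. i < m \<Longrightarrow> irreducible (p i)"
    and bound: "\<And>i. i < m \<Longrightarrow> \<not> p i ^ Suc (k i) dvd v"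
  shows "v dvd c * (\<Prod>i<m. p i ^ k i)"
proof (rule multiplicity_le_imp_dvd)
  show "v \<noteq> 0"
    using dvd nz by auto
  have c_nz: "c \<noteq> 0"
    using nz by auto
  have p_nz: "p i \<noteq> 0" if "i < m" for i
    using irr[OF that] by (auto simp: irreducible_def)
  have "(\<Prod>i<m. p i ^ k i) \<noteq> 0"
    by (subst prod_zero_iff) (use p_nz in auto)
  then have target_nz: "c * (\<Prod>i<m. p i ^ k i) \<noteq> 0"
    using c_nz by simp
  fix \<pi> :: 'a assume prime: "prime \<pi>"
  then have non_unit: "\<not> is_unit \<pi>"
    by auto
  show "multiplicity \<pi> v \<le> multiplicity \<pi> (c * (\<Prod>i<m. p i ^ k i))"
  proof (cases "\<exists>i<m. \<pi> dvd p i")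
    case True
    then obtain i where i: "i < m" "\<pi> dvd p i"
      by blast
    then obtain w where "p i = \<pi> * w"
      by (elim dvdE)
    with irr[OF i(1)] non_unit have "p i dvd \<pi>"
      by (metis irreducibleD mult_unit_dvd_iff dvd_refl)
    have "multiplicity \<pi> v \<le> k i"
    proof (rule ccontr)
      assume "\<not> multiplicity \<pi> v \<le> k i"
      then have "\<pi> ^ Suc (k i) dvd v"
        by (intro multiplicity_dvd') simp
      moreover have "p i ^ Suc (k i) dvd \<pi> ^ Suc (k i)"
        using \<open>p i dvd \<pi>\<close> by (rule dvd_power_same)
      ultimately show False
        using bound[OF i(1)] dvd_trans by blast
    qed
    also have "k i \<le> multiplicity \<pi> (c * (\<Prod>i<m. p i ^ k i))"
    proof (rule multiplicity_geI[OF target_nz non_unit])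
      have "\<pi> ^ k i dvd p i ^ k i"
        using i by (simp add: dvd_power_same)
      also have "p i ^ k i dvd c * (\<Prod>i<m. p i ^ k i)"
        using i by (intro dvd_mult dvd_prodI) auto
      finally show "\<pi> ^ k i dvd c * (\<Prod>i<m. p i ^ k i)" .
    qed
    finally show ?thesis .
  next
    case False
    then have "\<not> \<pi> dvd (\<Prod>i<m. p i ^ e i)"
      using prime by (auto simp: prime_dvd_prod_iff dest: prime_dvd_power)
    then have "multiplicity \<pi> (c * (\<Prod>i<m. p i ^ e i)) = multiplicity \<pi> c"
      using nz prime not_dvd_imp_multiplicity_0
      by (subst prime_elem_multiplicity_mult_distrib) auto
    moreover have "multiplicity \<pi> c \<le> multiplicity \<pi> (c * (\<Prod>i<m. p i ^ k i))"
      using target_nz by (intro dvd_imp_multiplicity_le dvd_triv_left)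
    ultimately show ?thesis
      using dvd_imp_multiplicity_le[OF dvd nz, of \<pi>] by linarith
  qed
qed

lemma primitive_dvd_smult_cancel:
  fixes g f :: "'a::{factorial_ring_gcd, semiring_gcd_mult_normalize} poly"
  assumes "g dvd smult c f" "c \<noteq> 0" "content g = 1"
  shows "g dvd f"
proof -
  have "fract_poly g dvd smult (to_fract c) (fract_poly f)"
    using assms(1) by (metis fract_poly_smult fract_poly_dvd)
  then have "fract_poly g dvd fract_poly f"
    using assms(2) by (simp add: dvd_smult_iff)
  then show ?thesis
    using assms(3) by (rule fract_poly_dvdD)
qed

context ore_algebra
begin

lemma removable_at_of_lowest_terms:
  assumes PL: "ore_mult sK dK P (emb L) = emb F" "P \<noteq> 0"
    and frac: "(sig_inv ^^ degree P) (lead_coeff F) * v = u * lead_coeff L" "coprime u v"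
    and v: "v \<noteq> 0" "v dvd lead_coeff L" and q: "q dvd v"
  shows "removable_at sig \<delta> q L (degree P)"
proof -
  obtain v' where v': "v = q * v'"
    using q by (elim dvdE)
  have "to_fract ((sig_inv ^^ degree P) (lead_coeff F))
      = to_fract u / to_fract (v' * q) * to_fract (lead_coeff L)"
    using frac(1) v' v(1) by (simp add: eq_divide_eq ac_simps flip: to_fract_mult)
  moreover have "q dvd lead_coeff L"
    using q v(2) by (rule dvd_trans)
  moreover have "coprime q u"
    using frac(2) v' by (simp add: coprime_commute)
  ultimately show ?thesis
    unfolding removable_at_def using PL v' v(1)
    by (intro conjI exI[of _ P] exI[of _ F] exI[of _ u] exI[of _ v']) (simp_all add: spow_sig_neg)
qed

lemma lead_coeff_dvd_of_non_removable:
  fixes m :: nat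
  assumes lcL: "lead_coeff L = smult c (\<Prod>i<m. p i ^ e i)"
    and irr: "\<forall>i<m. irreducible (p i)"
    and nr: "\<forall>i<m. \<forall>dd. dd > kk i \<longrightarrow> non_removable sig \<delta> (p i ^ dd) L"
    and L: "L \<noteq> 0" and F: "F \<in> ore_cont sig \<delta> L" "F \<noteq> 0"
  shows "lead_coeff L dvd smult c ((\<Prod>i<m. p i ^ kk i) * (sig_inv ^^ (degree F - degree L)) (lead_coeff F))"
proof -
  obtain P where P: "P \<noteq> 0" "degree F = degree P + degree L" "ore_mult sK dK P (emb L) = emb F"
    using ore_cont_factor[OF F L] by blast
  define f where "f = (sig_inv ^^ degree P) (lead_coeff F)"
  define l where "l = lead_coeff L"
  define u where "u = f div gcd f l"
  define v where "v = l div gcd f l"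
  have l_nz: "l \<noteq> 0"
    using L l_def by simp
  then have coprime: "coprime u v"
    unfolding u_def v_def by (intro div_gcd_coprime) simp
  have v_gcd: "l = v * gcd f l"
    unfolding v_def by simp
  then have v_nz: "v \<noteq> 0" and v_dvd: "v dvd l"
    using l_nz by (auto intro: dvdI)
  have fv: "f * v = u * l"
    unfolding u_def v_def by (simp add: div_mult_swap dvd_div_mult)
  have bound: "\<not> p i ^ Suc (kk i) dvd v" if i: "i < m" for i
  proof
    assume "p i ^ Suc (kk i) dvd v"
    then have "removable_at sig \<delta> (p i ^ Suc (kk i)) L (degree P)"
      using fv coprime v_nz v_dvd unfolding f_def l_def by (intro removable_at_of_lowest_terms[OF P(3,1)])
    moreover have "non_removable sig \<delta> (p i ^ Suc (kk i)) L"
      using nr i by (simp del: power_Suc)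
    ultimately show False
      unfolding non_removable_def by blast
  qed
  have l_factored: "l = [:c:] * (\<Prod>i<m. p i ^ e i)"
    by (simp add: l_def lcL)
  have "v dvd [:c:] * (\<Prod>i<m. p i ^ kk i)"
  proof (rule dvd_prod_power_bound)
    show "v dvd [:c:] * (\<Prod>i<m. p i ^ e i)" "[:c:] * (\<Prod>i<m. p i ^ e i) \<noteq> 0"
      using v_dvd l_nz l_factored by simp_all
  qed (use irr bound in simp_all)
  then obtain w where w: "[:c:] * (\<Prod>i<m. p i ^ kk i) = v * w"
    by (elim dvdE)
  have "smult c ((\<Prod>i<m. p i ^ kk i) * f) = ([:c:] * (\<Prod>i<m. p i ^ kk i)) * f"
    by simp
  also have "\<dots> = (f * v) * w"
    by (simp only: w ac_simps)
  also have "\<dots> = l * (u * w)"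
    by (simp only: fv ac_simps)
  finally have "smult c ((\<Prod>i<m. p i ^ kk i) * f) = l * (u * w)" .
  then show ?thesis
    using P f_def l_def by (auto intro: dvdI)
qed

lemma spow_sig_order_diff:
  "n \<le> m \<Longrightarrow> spow sig (int n - int m) = sig_inv ^^ (m - n)"
  using spow_sig_neg[of "m - n"] by (simp add: of_nat_diff)

lemma desingularized_normal_form:
  assumes "desingularized sig \<delta> L T" "T \<noteq> 0" "L \<noteq> 0"
  obtains c a b :: 'a and m :: nat and p :: "nat \<Rightarrow> 'a poly" and e kk :: "nat \<Rightarrow> nat"
  where "lead_coeff L = smult c (\<Prod>i<m. p i ^ e i)" "\<forall>i<m. irreducible (p i)"
    and "\<forall>i<m. \<forall>dd. dd > kk i \<longrightarrow> non_removable sig \<delta> (p i ^ dd) L"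
    and "a \<noteq> 0" "b \<noteq> 0"
    and "[:b:] * (\<Prod>i<m. p i ^ kk i) * (sig_inv ^^ (degree T - degree L)) (lead_coeff T) = [:a:] * lead_coeff L"
proof -
  from assms(1) obtain c m and p :: "nat \<Rightarrow> 'a poly" and e kk a b where
    T: "T \<in> ore_cont sig \<delta> L" and
    lcL: "lead_coeff L = smult c (\<Prod>i<m. p i ^ e i)" and
    irr: "\<forall>i<m. irreducible (p i) \<and> degree (p i) > 0 \<and> e i > 0" and
    b: "b \<noteq> 0" and
    eq: "to_fract (spow sig (int (degree L) - int (degree T)) (lead_coeff T))
          = to_fract [:a:] / to_fract ([:b:] * (\<Prod>i<m. p i ^ kk i)) * to_fract (lead_coeff L)" and
    nr: "\<forall>i<m. \<forall>dd. dd > kk i \<longrightarrow> non_removable sig \<delta> (p i ^ dd) L"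
    unfolding desingularized_def by blast
  define t where "t = (sig_inv ^^ (degree T - degree L)) (lead_coeff T)"
  define H where "H = [:b:] * (\<Prod>i<m. p i ^ kk i)"
  have "(\<Prod>i<m. p i ^ kk i) \<noteq> 0"
    by (subst prod_zero_iff) (use irr in \<open>auto simp: irreducible_def\<close>)
  then have "H \<noteq> 0"
    using b by (simp add: H_def)
  moreover have "to_fract t = to_fract [:a:] / to_fract H * to_fract (lead_coeff L)"
    using eq degree_le_of_ore_cont[OF T assms(2,3)] by (simp add: spow_sig_order_diff t_def H_def)
  ultimately have normal: "H * t = [:a:] * lead_coeff L"
    by (simp add: field_simps flip: to_fract_mult)
  have "t \<noteq> 0"
    using assms(2) by (simp add: t_def affine_subst_eq_0_iff[OF is_affine_subst_sig_inv_pow])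
  then have "a \<noteq> 0"
    using normal \<open>H \<noteq> 0\<close> by auto
  with lcL irr nr b normal show ?thesis
    by (intro that) (auto simp: t_def H_def)
qed

lemma desingularized_lead_coeff_dvd:
  assumes T: "desingularized sig \<delta> L T" "T \<noteq> 0" and L: "L \<noteq> 0"
    and F: "F \<in> ore_cont sig \<delta> L" "F \<noteq> 0"
  obtains c where "c \<noteq> 0"
    "(sig_inv ^^ (degree T - degree L)) (lead_coeff T)
       dvd smult c ((sig_inv ^^ (degree F - degree L)) (lead_coeff F))"
proof -
  obtain c a b and m :: nat and p e kk where lcL: "lead_coeff L = smult c (\<Prod>i<m. p i ^ e i)"
    and irr: "\<forall>i<m. irreducible (p i)"
    and nr: "\<forall>i<m. \<forall>dd. dd > kk i \<longrightarrow> non_removable sig \<delta> (p i ^ dd) L"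
    and a: "a \<noteq> 0" and b: "b \<noteq> 0"
    and normal: "[:b:] * (\<Prod>i<m. p i ^ kk i) * (sig_inv ^^ (degree T - degree L)) (lead_coeff T)
                   = [:a:] * lead_coeff L"
    by (rule desingularized_normal_form[OF T L])
  define t where "t = (sig_inv ^^ (degree T - degree L)) (lead_coeff T)"
  define f where "f = (sig_inv ^^ (degree F - degree L)) (lead_coeff F)"
  define H where "H = (\<Prod>i<m. p i ^ kk i)"
  have "H \<noteq> 0"
    unfolding H_def by (subst prod_zero_iff) (use irr in \<open>auto simp: irreducible_def\<close>)
  have "c \<noteq> 0"
    using L lcL by auto
  have "lead_coeff L dvd smult c (H * f)"
    using lead_coeff_dvd_of_non_removable[OF lcL irr nr L F] by (simp add: H_def f_def)
  then obtain q where q: "smult c (H * f) = lead_coeff L * q"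
    by (elim dvdE)
  have "H * smult (a * c) f = [:a:] * smult c (H * f)"
    by (simp add: ac_simps)
  also have "\<dots> = ([:a:] * lead_coeff L) * q"
    by (simp only: q ac_simps)
  also have "\<dots> = H * ([:b:] * t * q)"
    unfolding normal[symmetric] H_def t_def by (simp only: ac_simps)
  also have "\<dots> = H * (t * ([:b:] * q))"
    by (simp only: ac_simps)
  finally have "smult (a * c) f = t * ([:b:] * q)"
    using \<open>H \<noteq> 0\<close> by (rule mult_left_cancel[THEN iffD1, rotated])
  then have "t dvd smult (a * c) f"
    by (rule dvdI)
  with a \<open>c \<noteq> 0\<close> show ?thesis
    by (intro that[of "a * c"]) (simp_all add: t_def f_def)
qed

lemma desingularized_degree_lead_coeff_le:
  assumes T: "desingularized sig \<delta> L T" "T \<noteq> 0" and L: "L \<noteq> 0"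
    and Q: "Q \<in> ore_cont sig \<delta> L" "Q \<noteq> 0"
  shows "degree (lead_coeff T) \<le> degree (lead_coeff Q)"
proof -
  obtain c where "c \<noteq> 0" and dvd: "(sig_inv ^^ (degree T - degree L)) (lead_coeff T)
       dvd smult c ((sig_inv ^^ (degree Q - degree L)) (lead_coeff Q))"
    using desingularized_lead_coeff_dvd[OF T L Q] .
  have "smult c ((sig_inv ^^ (degree Q - degree L)) (lead_coeff Q)) \<noteq> 0"
    using \<open>c \<noteq> 0\<close> Q(2) by (simp add: affine_subst_eq_0_iff[OF is_affine_subst_sig_inv_pow])
  with dvd have "degree ((sig_inv ^^ (degree T - degree L)) (lead_coeff T))
      \<le> degree (smult c ((sig_inv ^^ (degree Q - degree L)) (lead_coeff Q)))"
    by (rule dvd_imp_degree_le)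
  then show ?thesis
    using \<open>c \<noteq> 0\<close> by (simp add: affine_subst_degree[OF is_affine_subst_sig_inv_pow])
qed

lemma desingularized_ore_d_pow:
  assumes T: "desingularized sig \<delta> L T" "T \<noteq> 0" and L: "L \<noteq> 0"
  shows "desingularized sig \<delta> L ((ore_d sig \<delta> ^^ i) T)"
proof -
  define T' where "T' = (ore_d sig \<delta> ^^ i) T"
  have T'_lead: "degree T' = degree T + i" "lead_coeff T' = (sig ^^ i) (lead_coeff T)"
    using degree_lead_coeff_ore_d_pow[OF T(2), of i] unfolding T'_def by blast+
  have "degree L \<le> degree T"
    using T L by (simp add: desingularized_def degree_le_of_ore_cont)
  then have "spow sig (int (degree L) - int (degree T')) = sig_inv ^^ (degree T' - degree L)"
    using T'_lead(1) by (intro spow_sig_order_diff) simp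
  also have "degree T' - degree L = (degree T - degree L) + i"
    using T'_lead(1) \<open>degree L \<le> degree T\<close> by simp
  finally have "spow sig (int (degree L) - int (degree T')) (lead_coeff T')
      = (sig_inv ^^ (degree T - degree L)) ((sig_inv ^^ i) ((sig ^^ i) (lead_coeff T)))"
    by (simp only: T'_lead(2) funpow_add o_apply)
  also have "\<dots> = spow sig (int (degree L) - int (degree T)) (lead_coeff T)"
    using \<open>degree L \<le> degree T\<close> by (simp add: funpow_cancel sig_inv_sig spow_sig_order_diff)
  finally have lead: "spow sig (int (degree L) - int (degree T')) (lead_coeff T')
      = spow sig (int (degree L) - int (degree T)) (lead_coeff T)" .
  have "T' \<in> ore_cont sig \<delta> L"
    using T(1) by (simp add: T'_def desingularized_def ore_d_pow_in_ore_cont)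
  with T(1) show ?thesis
    unfolding T'_def[symmetric] desingularized_def lead by blast
qed

lemma desingularized_primitive_dvd:
  assumes T: "desingularized sig \<delta> L T" "T \<noteq> 0" and L: "L \<noteq> 0"
    and g: "lead_coeff T = smult a g" "content g = 1"
    and F: "F \<in> ore_cont sig \<delta> L" "F \<noteq> 0" "degree T \<le> degree F"
  shows "(sig ^^ (degree F - degree T)) g dvd lead_coeff F"
proof -
  define n where "n = degree T - degree L"
  define g' where "g' = (sig_inv ^^ n) g"
  define f where "f = (sig_inv ^^ (degree F - degree L)) (lead_coeff F)"
  have "degree L \<le> degree T"
    using T L by (simp add: desingularized_def degree_le_of_ore_cont)
  obtain c where "c \<noteq> 0" and "(sig_inv ^^ n) (lead_coeff T) dvd smult c f"
    using desingularized_lead_coeff_dvd[OF T L F(1,2)] unfolding n_def f_def by blast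
  moreover have "(sig_inv ^^ n) (lead_coeff T) = smult a g'"
    by (simp add: g(1) g'_def affine_subst_smult[OF is_affine_subst_sig_inv_pow])
  ultimately have dvd_c: "g' dvd smult c f"
    by (metis dvd_refl dvd_smult dvd_trans)
  have "content g' dvd content g"
    using content_dvd_content_affine_subst[OF is_affine_subst_sig_pow, of g' n]
    by (simp add: g'_def funpow_cancel sig_sig_inv)
  then have "content g' = 1"
    using g(2) by (metis is_unit_normalize normalize_content)
  with dvd_c \<open>c \<noteq> 0\<close> have "g' dvd f"
    by (rule primitive_dvd_smult_cancel)
  then have "(sig ^^ (degree F - degree L)) g' dvd (sig ^^ (degree F - degree L)) f"
    by (rule affine_subst_dvd[OF is_affine_subst_sig_pow])
  moreover have "(sig ^^ (degree F - degree L)) f = lead_coeff F"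
    by (simp add: f_def funpow_cancel sig_sig_inv)
  moreover have "degree F - degree L = (degree F - degree T) + n"
    using \<open>degree L \<le> degree T\<close> F(3) by (simp add: n_def)
  then have "(sig ^^ (degree F - degree L)) g' = (sig ^^ (degree F - degree T)) g"
    by (simp add: funpow_add g'_def funpow_cancel sig_sig_inv)
  ultimately show ?thesis
    by simp
qed

end

theorem mainTheorem12:
  fixes \<gamma> \<tau> :: "'a::{factorial_ring_gcd, semiring_gcd_mult_normalize}"
    and \<delta> :: "'a poly \<Rightarrow> 'a poly"
    and L T :: "'a poly poly"
    and r k :: nat
  assumes pid: "pid TYPE('a)"
    and gamma_unit: "is_unit \<gamma>"
    and delta_add: "\<And>p q. \<delta> (p + q) = \<delta> p + \<delta> q"
    and delta_smult: "\<And>c p. \<delta> (smult c p) = smult c (\<delta> p)"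
    and delta_mult: "\<And>p q. \<delta> (p * q) = ore_sigma \<gamma> \<tau> p * \<delta> q + \<delta> p * q"
    and delta_x: "degree (\<delta> [:0, 1:]) \<le> 1"
    and L_order: "degree L = r" and r_pos: "r > 0"
    and k_ge: "k \<ge> r"
    and T_des: "desingularized (ore_sigma \<gamma> \<tau>) \<delta> L T"
    and T_order: "degree T = k"
  shows "degree (lead_coeff T) =
           (LEAST n. \<exists>Q. Q \<in> Mk (ore_sigma \<gamma> \<tau>) \<delta> k L \<and> Q \<noteq> 0 \<and> n = degree (lead_coeff Q)) \<and>
         (\<forall>i. desingularized (ore_sigma \<gamma> \<tau>) \<delta> L (ore_mult (ore_sigma \<gamma> \<tau>) \<delta> (monom 1 i) T)) \<and>
         (\<forall>(a::'a) (g::'a poly). lead_coeff T = smult a g \<and> content g = 1 \<longrightarrow>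
           (\<forall>F j. F \<in> ore_cont (ore_sigma \<gamma> \<tau>) \<delta> L \<and> F \<noteq> 0 \<and> degree F = j \<and> j \<ge> k \<longrightarrow>
              spow (ore_sigma \<gamma> \<tau>) (int j - int k) g dvd lead_coeff F))"
proof -
  interpret ore_algebra \<gamma> \<tau> \<delta>
    by unfold_locales (fact gamma_unit delta_add delta_mult)+
  have L: "L \<noteq> 0" and T: "T \<noteq> 0"
    using L_order r_pos T_order k_ge by auto
  have "degree (lead_coeff T) =
      (LEAST n. \<exists>Q. Q \<in> Mk sig \<delta> k L \<and> Q \<noteq> 0 \<and> n = degree (lead_coeff Q))"
  proof (rule Least_equality[symmetric])
    show "\<exists>Q. Q \<in> Mk sig \<delta> k L \<and> Q \<noteq> 0 \<and> degree (lead_coeff T) = degree (lead_coeff Q)"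
      using T_des T T_order by (auto simp: Mk_def desingularized_def)
  qed (use desingularized_degree_lead_coeff_le[OF T_des T L] in \<open>auto simp: Mk_def\<close>)
  moreover have "\<forall>i. desingularized sig \<delta> L (ore_mult sig \<delta> (monom 1 i) T)"
    using desingularized_ore_d_pow[OF T_des T L] by (simp add: ore_mult_monom)
  moreover have "spow sig (int j - int k) g dvd lead_coeff F"
    if "lead_coeff T = smult a g" "content g = 1" "F \<in> ore_cont sig \<delta> L" "F \<noteq> 0"
      and "degree F = j" "j \<ge> k" for a g F j
    using desingularized_primitive_dvd[OF T_des T L that(1-4)] that(5,6) T_order
    by (simp add: spow_sig_nat flip: of_nat_diff)
  ultimately show ?thesis
    by blast
qed

end
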